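(* Fix a base $\beta\ge2$, let $0<C<1$, and suppose the mantissa length $t$ satisfies $$t\ \ge\ 1+\log_\beta\!\Big[\frac{(1+C)(4+5C)}{C}\sum_{m=1}^{n-1}\sum_{\ell=1}^{n-m}g\big[\mathbf{CP}_\ell(\mathbb{R})\big]\,g\big[\mathbf{CP}_m(\mathbb{R})\big]\Big].$$ Then $G\big[\widehat{\mathbf{CP}}_n(\mathbb{R})\big]\le(1+C)\,g\big[\mathbf{CP}_n(\mathbb{R})\big]$.
   Context: Exact Gaussian elimination without pivoting on $A=(a_{i,j})$: $a^{(1)}_{i,j}=a_{i,j}$, $a^{(k+1)}_{i,j}=a^{(k)}_{i,j}-a^{(k)}_{i,k}a^{(k)}_{k,j}/a^{(k)}_{k,k}$ for $k+1\le i,j\le n$; $g(A)=\max_{i,j,k}|a^{(k)}_{i,j}|/\max_{i,j}|a_{i,j}|$; $\mathbf{CP}_n(\mathbb{R})$ is the set of invertible real $n\times n$ matrices for which this is defined and $|a^{(k)}_{i,j}|\le|a^{(k)}_{k,k}|$ for all $k$, $i,j\ge k$; $g[\mathbf{X}]=\sup_{A\in\mathbf{X}}g(A)$. Floating-point model with base $\beta$, mantissa length $t$, unit roundoff $u=\beta^{1-t}/2$ (overflow/underflow ignored): a floating-point elimination run on a real $n\times n$ matrix $A$ is an array $\hat a^{(k)}_{i,j}$ with $\hat a^{(1)}_{i,j}=a_{i,j}(1+\phi^{(0)}_{i,j})$, $\hat a^{(k+1)}_{i,j}=\big[\hat a^{(k)}_{i,j}-s_{i,k}\hat a^{(k)}_{k,j}(1+\theta^{(k)}_{i,j})\big](1+\phi^{(k)}_{i,j})$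 for $k+1\le i,j\le n$, where $s_{i,k}=\frac{\hat a^{(k)}_{i,k}}{\hat a^{(k)}_{k,k}}(1+\varphi_{i,k})$, for some parameters with $|\theta^{(k)}_{i,j}|,|\phi^{(k)}_{i,j}|,|\varphi_{i,k}|\le u$, and with $|s_{i,k}|\le 1$, $|s_{i,k}(1+\theta^{(k)}_{i,j})|\le1$. $\widehat{\mathbf{CP}}_n(\mathbb{R})$ consists of (invertible real $A$, run) pairs with all $\hat a^{(k)}_{k,k}\ne0$ and $|\hat a^{(k)}_{i,j}|\le|\hat a^{(k)}_{k,k}|$ for all $k$ and $i,j\ge k$. The floating-point growth factor is $G(A)=\max_{i,j,k}|\hat a^{(k)}_{i,j}|/\max_{i,j}|\hat a^{(1)}_{i,j}|$ and $G[\widehat{\mathbf{CP}}_n(\mathbb{R})]$ is its supremum over $\widehat{\mathbf{CP}}_n(\mathbb{R})$. *)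

theory Defs
  imports Complex_Main "HOL-Library.Extended_Real"
begin

text \<open>Real n x n matrices are functions nat => nat => real, entries indexed by 1..n
  (values outside this range are irrelevant).\<close>

definition mat_invertible :: "nat \<Rightarrow> (nat \<Rightarrow> nat \<Rightarrow> real) \<Rightarrow> bool" where
  "mat_invertible n A \<longleftrightarrow> (\<exists>B :: nat \<Rightarrow> nat \<Rightarrow> real.
     (\<forall>i\<in>{1..n}. \<forall>j\<in>{1..n}. (\<Sum>l=1..n. A i l * B l j) = (if i = j then 1 else 0)) \<and>
     (\<forall>i\<in>{1..n}. \<forall>j\<in>{1..n}. (\<Sum>l=1..n. B i l * A l j) = (if i = j then 1 else 0)))"

text \<open>Exact Gaussian elimination: ge A k i j = a^(k)_{i,j} (for k >= 1).\<close>
fun ge :: "(nat \<Rightarrow> nat \<Rightarrow> real) \<Rightarrow> nat \<Rightarrow> nat \<Rightarrow> nat \<Rightarrow> real" where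
  "ge A 0 i j = A i j"
| "ge A (Suc k) i j =
     (if k = 0 then A i j
      else ge A k i j - ge A k i k * ge A k k j / ge A k k k)"

definition max_entry :: "nat \<Rightarrow> (nat \<Rightarrow> nat \<Rightarrow> real) \<Rightarrow> real" where
  "max_entry n A = Max {\<bar>A i j\<bar> | i j. i \<in> {1..n} \<and> j \<in> {1..n}}"

definition max_stage_entry :: "nat \<Rightarrow> (nat \<Rightarrow> nat \<Rightarrow> nat \<Rightarrow> real) \<Rightarrow> real" where
  "max_stage_entry n a = Max {\<bar>a k i j\<bar> | k i j. 1 \<le> k \<and> k \<le> i \<and> k \<le> j \<and> i \<le> n \<and> j \<le> n}"

definition growth :: "nat \<Rightarrow> (nat \<Rightarrow> nat \<Rightarrow> real) \<Rightarrow> real" where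
  "growth n A = max_stage_entry n (ge A) / max_entry n A"

definition CP :: "nat \<Rightarrow> (nat \<Rightarrow> nat \<Rightarrow> real) set" where
  "CP n = {A. mat_invertible n A \<and>
      (\<forall>k\<in>{1..<n}. ge A k k k \<noteq> 0) \<and>
      (\<forall>k\<in>{1..n}. \<forall>i\<in>{k..n}. \<forall>j\<in>{k..n}. \<bar>ge A k i j\<bar> \<le> \<bar>ge A k k k\<bar>)}"

definition gCP :: "nat \<Rightarrow> ereal" where
  "gCP n = (SUP A\<in>CP n. ereal (growth n A))"

definition unit_roundoff :: "nat \<Rightarrow> nat \<Rightarrow> real" where
  "unit_roundoff \<beta> t = real \<beta> powr (1 - real t) / 2"

text \<open>ah is a floating-point elimination run on A (ah k i j = hat a^(k)_{i,j}).\<close>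
definition fp_run :: "nat \<Rightarrow> nat \<Rightarrow> nat \<Rightarrow> (nat \<Rightarrow> nat \<Rightarrow> real)
      \<Rightarrow> (nat \<Rightarrow> nat \<Rightarrow> nat \<Rightarrow> real) \<Rightarrow> bool" where
  "fp_run \<beta> t n A ah \<longleftrightarrow>
    (\<exists>(\<theta>::nat \<Rightarrow> nat \<Rightarrow> nat \<Rightarrow> real) (\<phi>::nat \<Rightarrow> nat \<Rightarrow> nat \<Rightarrow> real) (\<vv>::nat \<Rightarrow> nat \<Rightarrow> real).
      (\<forall>k i j. \<bar>\<theta> k i j\<bar> \<le> unit_roundoff \<beta> t \<and> \<bar>\<phi> k i j\<bar> \<le> unit_roundoff \<beta> t) \<and>
      (\<forall>i k. \<bar>\<vv> i k\<bar> \<le> unit_roundoff \<beta> t) \<and>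
      (\<forall>i\<in>{1..n}. \<forall>j\<in>{1..n}. ah 1 i j = A i j * (1 + \<phi> 0 i j)) \<and>
      (\<forall>k\<ge>1. \<forall>i\<in>{k+1..n}. \<forall>j\<in>{k+1..n}.
         (let s = ah k i k / ah k k k * (1 + \<vv> i k) in
           ah (k+1) i j = (ah k i j - s * ah k k j * (1 + \<theta> k i j)) * (1 + \<phi> k i j) \<and>
           \<bar>s\<bar> \<le> 1 \<and> \<bar>s * (1 + \<theta> k i j)\<bar> \<le> 1)))"

definition hatCP :: "nat \<Rightarrow> nat \<Rightarrow> nat
      \<Rightarrow> ((nat \<Rightarrow> nat \<Rightarrow> real) \<times> (nat \<Rightarrow> nat \<Rightarrow> nat \<Rightarrow> real)) set" where
  "hatCP \<beta> t n = {(A, ah). mat_invertible n A \<and> fp_run \<beta> t n A ah \<and>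
      (\<forall>k\<in>{1..n}. ah k k k \<noteq> 0) \<and>
      (\<forall>k\<in>{1..n}. \<forall>i\<in>{k..n}. \<forall>j\<in>{k..n}. \<bar>ah k i j\<bar> \<le> \<bar>ah k k k\<bar>)}"

definition fp_growth :: "nat \<Rightarrow> (nat \<Rightarrow> nat \<Rightarrow> nat \<Rightarrow> real) \<Rightarrow> real" where
  "fp_growth n ah = max_stage_entry n ah / max_entry n (ah 1)"

definition GhatCP :: "nat \<Rightarrow> nat \<Rightarrow> nat \<Rightarrow> ereal" where
  "GhatCP \<beta> t n = (SUP p\<in>hatCP \<beta> t n. ereal (fp_growth n (snd p)))"

end

theory Submission
  imports Defs "Jordan_Normal_Form.Determinant"
begin

text \<open>Every computed stage of the run differs from one exact elimination step by at most
  5u times the current pivot p_k. Let \<delta>_q = 5u (|p_q| + ... + |p_(N-1)|) be the error still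
  to be committed from stage q on. Multiplying row q of the computed upper factor by
  1 + \<delta>_q / |p_q| yields an exact "shadow" matrix X = LU whose k-th exact elimination stage
  has pivot of modulus |p_k| + \<delta>_k, is dominated by it, and lies within \<delta>_k of the
  computed stage. So X is in CP_N and |p_k| \<le> g(X) (|p_1| + \<delta>_1). Applied to the leading
  r \<times> r parts of the run this gives, by strong induction, |p_r| \<le> (1 + C) g[CP_r] |p_1| for
  r < n as long as 5u (1 + C) (g[CP_1] + ... + g[CP_(n-1)]) \<le> C, which the bound on t
  guarantees. Then \<delta>_1 \<le> C |p_1|, and the growth factor of the run is at most
  (1 + C) g(X) \<le> (1 + C) g[CP_n].\<close>

lemma perturbed_update_error:
  fixes a b c p s \<theta> \<phi> \<epsilon> u :: real
  assumes "p \<noteq> 0" and "\<bar>a\<bar> \<le> \<bar>p\<bar>" and "\<bar>b\<bar> \<le> \<bar>p\<bar>"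
    and "\<bar>\<theta>\<bar> \<le> u" and "\<bar>\<phi>\<bar> \<le> u" and "\<bar>\<epsilon>\<bar> \<le> u" and "u \<le> 1/8"
    and s: "s = c / p * (1 + \<epsilon>)" and "\<bar>s * (1 + \<theta>)\<bar> \<le> 1"
  shows "\<bar>(a - s * b * (1 + \<theta>)) * (1 + \<phi>) - (a - c * b / p)\<bar> \<le> 5 * u * \<bar>p\<bar>"
proof -
  define w where "w = s * (1 + \<theta>)"
  define d where "d = (1 + \<epsilon>) * (1 + \<theta>)"
  have u0: "0 \<le> u" using assms(4) by linarith
  have "(7/8) * (7/8) \<le> d"
    unfolding d_def using assms(4,6,7) by (intro mult_mono) (auto simp: abs_le_iff)
  hence d_ge: "49/64 \<le> d" by simp
  have "w = c / p * d" unfolding w_def d_def s by (simp add: algebra_simps add_divide_distrib)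
  hence "c / p = w / d" using d_ge by simp
  hence expand: "(a - s * b * (1 + \<theta>)) * (1 + \<phi>) - (a - c * b / p) = a * \<phi> - w * b * (\<phi> + (d - 1) / d)"
    using d_ge assms(1) unfolding w_def by (simp add: field_simps)
  have "\<bar>\<epsilon> * \<theta>\<bar> \<le> u * u" unfolding abs_mult using assms(4,6) u0 by (intro mult_mono) auto
  also have "\<dots> \<le> u / 8" using u0 assms(7) by (simp add: mult_left_mono[of u "1/8" u, simplified])
  moreover have "d - 1 = \<epsilon> + \<theta> + \<epsilon> * \<theta>" unfolding d_def by (simp add: algebra_simps)
  ultimately have "\<bar>d - 1\<bar> \<le> 17/8 * u"
    using abs_triangle_ineq[of "\<epsilon> + \<theta>" "\<epsilon> * \<theta>"] abs_triangle_ineq[of \<epsilon> \<theta>] assms(4,6) by linarith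
  hence "\<bar>d - 1\<bar> / d \<le> (17/8 * u) / (49/64)" using d_ge u0 by (intro frac_le) auto
  hence "\<bar>(d - 1) / d\<bar> \<le> (17/8 * u) / (49/64)" using d_ge by (simp add: abs_divide)
  hence rel_err: "\<bar>(d - 1) / d\<bar> \<le> 136/49 * u" by simp
  have "\<bar>a * \<phi> - w * b * (\<phi> + (d - 1) / d)\<bar> \<le> \<bar>a\<bar> * \<bar>\<phi>\<bar> + \<bar>w\<bar> * \<bar>b\<bar> * (\<bar>\<phi>\<bar> + \<bar>(d - 1) / d\<bar>)"
  proof -
    have "\<bar>w * b * (\<phi> + (d - 1) / d)\<bar> \<le> \<bar>w\<bar> * \<bar>b\<bar> * (\<bar>\<phi>\<bar> + \<bar>(d - 1) / d\<bar>)"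
      unfolding abs_mult by (rule mult_left_mono[OF abs_triangle_ineq]) simp
    then show ?thesis
      using abs_triangle_ineq4[of "a * \<phi>" "w * b * (\<phi> + (d - 1) / d)"] by (simp add: abs_mult)
  qed
  also have "\<dots> \<le> \<bar>p\<bar> * u + 1 * \<bar>p\<bar> * (u + 136/49 * u)"
    using assms(2,3,5,9) rel_err u0 unfolding w_def by (intro add_mono mult_mono) auto
  also have "\<dots> \<le> 5 * u * \<bar>p\<bar>" using u0 by (simp add: algebra_simps)
  finally show ?thesis using expand by simp
qed

lemma ge_LU_product:
  fixes L U :: "nat \<Rightarrow> nat \<Rightarrow> real"
  assumes L_diag: "\<And>i. L i i = 1" and L_upper: "\<And>i q. i < q \<Longrightarrow> L i q = 0"
    and U_lower: "\<And>q j. j < q \<Longrightarrow> U q j = 0" and U_diag: "\<And>k. k \<in> {1..N} \<Longrightarrow> U k k \<noteq> 0"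
  shows "1 \<le> k \<Longrightarrow> k \<le> N \<Longrightarrow> k \<le> i \<Longrightarrow> k \<le> j \<Longrightarrow>
     ge (\<lambda>i j. \<Sum>q=1..N. L i q * U q j) k i j = (\<Sum>q=k..N. L i q * U q j)"
proof (induction k arbitrary: i j)
  case 0 then show ?case by simp
next
  case (Suc k)
  show ?case
  proof (cases "k = 0")
    case True then show ?thesis by simp
  next
    case False
    let ?A = "\<lambda>i j. \<Sum>q=1..N. L i q * U q j"
    have k: "1 \<le> k" "k \<le> N" using False Suc.prems by auto
    have split: "(\<Sum>q=k..N. L i q * U q j) = L i k * U k j + (\<Sum>q=Suc k..N. L i q * U q j)" for i j
      using k by (simp add: sum.atLeast_Suc_atMost)
    have col_k: "(\<Sum>q=Suc k..N. L i q * U q k) = 0" for i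
      by (rule sum.neutral) (auto simp: U_lower)
    have row_k: "(\<Sum>q=Suc k..N. L k q * U q j) = 0" for j
      by (rule sum.neutral) (auto simp: L_upper)
    have "ge ?A k i j = L i k * U k j + (\<Sum>q=Suc k..N. L i q * U q j)"
      using Suc.IH[of i j] k Suc.prems split by auto
    moreover have "ge ?A k i k = L i k * U k k"
      using Suc.IH[of i k] k Suc.prems split[of i k] col_k[of i] by auto
    moreover have "ge ?A k k j = U k j"
      using Suc.IH[of k j] k Suc.prems split[of k j] row_k[of j] L_diag by auto
    moreover have "ge ?A k k k = U k k"
      using Suc.IH[of k k] k split[of k k] row_k[of k] L_diag by auto
    ultimately show ?thesis using False U_diag k by simp
  qed
qed

lemma mat_invertible_LU_product:
  fixes L U :: "nat \<Rightarrow> nat \<Rightarrow> real"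
  assumes L_diag: "\<And>i. L i i = 1" and L_upper: "\<And>i q. i < q \<Longrightarrow> L i q = 0"
    and U_lower: "\<And>q j. j < q \<Longrightarrow> U q j = 0" and U_diag: "\<And>k. k \<in> {1..N} \<Longrightarrow> U k k \<noteq> 0"
  shows "mat_invertible N (\<lambda>i j. \<Sum>q=1..N. L i q * U q j)"
proof -
  define LJ where "LJ = mat N N (\<lambda>(i,j). L (Suc i) (Suc j))"
  define UJ where "UJ = mat N N (\<lambda>(i,j). U (Suc i) (Suc j))"
  have LC: "LJ \<in> carrier_mat N N" and UC: "UJ \<in> carrier_mat N N" unfolding LJ_def UJ_def by auto
  have "det LJ = prod_list (diag_mat LJ)"
    by (rule det_lower_triangular[OF _ LC]) (auto simp: LJ_def L_upper)
  moreover have "diag_mat LJ = map (\<lambda>i. 1) [0..<N]"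
    using LC by (auto simp: diag_mat_def LJ_def L_diag)
  ultimately have det_L: "det LJ = 1" by (simp add: map_replicate_const)
  have "det UJ = prod_list (diag_mat UJ)"
    by (rule det_upper_triangular[OF _ UC]) (auto simp: UJ_def U_lower upper_triangular_def)
  hence det_U: "det UJ \<noteq> 0"
    using U_diag by (auto simp: diag_mat_def UJ_def)
  define XJ where "XJ = LJ * UJ"
  have XC: "XJ \<in> carrier_mat N N" unfolding XJ_def using LC UC by auto
  have "det XJ \<noteq> 0" unfolding XJ_def det_mult[OF LC UC] using det_L det_U by simp
  from det_non_zero_imp_unit[OF XC this]
  obtain BJ where BJ: "BJ \<in> carrier_mat N N" "BJ * XJ = 1\<^sub>m N" "XJ * BJ = 1\<^sub>m N"
    unfolding Units_def ring_mat_simps by auto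
  have XJ_entry: "XJ $$ (i,j) = (\<Sum>q=1..N. L (Suc i) q * U q (Suc j))" if "i < N" "j < N" for i j
  proof -
    have "XJ $$ (i,j) = (\<Sum>q<N. L (Suc i) (Suc q) * U (Suc q) (Suc j))"
      using that LC UC unfolding XJ_def
      by (simp add: scalar_prod_def LJ_def UJ_def atLeast0LessThan)
    also have "\<dots> = (\<Sum>q=1..N. L (Suc i) q * U q (Suc j))" by (simp only: One_nat_def sum.atLeast1_atMost_eq)
    finally show ?thesis .
  qed
  define B where "B = (\<lambda>i j. BJ $$ (i - 1, j - 1))"
  show ?thesis unfolding mat_invertible_def
  proof (intro exI[of _ B] conjI ballI)
    fix i j assume ij: "i \<in> {1..N}" "j \<in> {1..N}"
    define i' j' where "i' = i - 1" and "j' = j - 1"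
    have i': "i = Suc i'" "i' < N" and j': "j = Suc j'" "j' < N" using ij by (auto simp: i'_def j'_def)
    have "(XJ * BJ) $$ (i', j') = (\<Sum>l<N. XJ $$ (i', l) * BJ $$ (l, j'))"
      using XC BJ(1) i' j' by (simp add: scalar_prod_def atLeast0LessThan)
    also have "\<dots> = (\<Sum>l<N. (\<Sum>q=1..N. L i q * U q (Suc l)) * B (Suc l) j)"
      by (rule sum.cong) (simp_all add: XJ_entry i' j' B_def)
    also have "\<dots> = (\<Sum>l=1..N. (\<Sum>q=1..N. L i q * U q l) * B l j)"
      by (simp only: One_nat_def sum.atLeast1_atMost_eq)
    finally show "(\<Sum>l=1..N. (\<Sum>q=1..N. L i q * U q l) * B l j) = (if i = j then 1 else 0)"
      using BJ(3) i' j' by simp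
    have "(BJ * XJ) $$ (i', j') = (\<Sum>l<N. BJ $$ (i', l) * XJ $$ (l, j'))"
      using XC BJ(1) i' j' by (simp add: scalar_prod_def atLeast0LessThan)
    also have "\<dots> = (\<Sum>l<N. B i (Suc l) * (\<Sum>q=1..N. L (Suc l) q * U q j))"
      by (rule sum.cong) (simp_all add: XJ_entry i' j' B_def)
    also have "\<dots> = (\<Sum>l=1..N. B i l * (\<Sum>q=1..N. L l q * U q j))"
      by (simp only: One_nat_def sum.atLeast1_atMost_eq)
    finally show "(\<Sum>l=1..N. B i l * (\<Sum>q=1..N. L l q * U q j)) = (if i = j then 1 else 0)"
      using BJ(2) i' j' by simp
  qed
qed

lemma finite_stage_entries:
  fixes N :: nat
  shows "finite {\<bar>a k i j\<bar> | k i j. 1 \<le> k \<and> k \<le> i \<and> k \<le> j \<and> i \<le> N \<and> j \<le> N}"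
proof (rule finite_subset)
  show "{\<bar>a k i j\<bar> | k i j. 1 \<le> k \<and> k \<le> i \<and> k \<le> j \<and> i \<le> N \<and> j \<le> N}
     \<subseteq> (\<lambda>(k,i,j). \<bar>a k i j\<bar>) ` ({..N} \<times> {..N} \<times> {..N})"
  proof
    fix x assume "x \<in> {\<bar>a k i j\<bar> | k i j. 1 \<le> k \<and> k \<le> i \<and> k \<le> j \<and> i \<le> N \<and> j \<le> N}"
    then obtain k i j where "x = \<bar>a k i j\<bar>" "k \<le> i" "k \<le> j" "i \<le> N" "j \<le> N" by blast
    then show "x \<in> (\<lambda>(k,i,j). \<bar>a k i j\<bar>) ` ({..N} \<times> {..N} \<times> {..N})"
      by (intro image_eqI[where x="(k,i,j)"]) auto
  qed
qed auto

lemma finite_entries: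
  fixes N :: nat
  shows "finite {\<bar>A i j\<bar> | i j. i \<in> {1..N} \<and> j \<in> {1..N}}"
  by (rule finite_image_set2) auto

lemma fp_run_update_error:
  assumes "fp_run \<beta> t n A a" and "unit_roundoff \<beta> t \<le> 1/8"
    and "1 \<le> k" "k < i" "k < j" "i \<le> n" "j \<le> n"
    and "a k k k \<noteq> 0" "\<bar>a k i j\<bar> \<le> \<bar>a k k k\<bar>" "\<bar>a k k j\<bar> \<le> \<bar>a k k k\<bar>"
  shows "\<bar>a (Suc k) i j - (a k i j - a k i k * a k k j / a k k k)\<bar> \<le> 5 * unit_roundoff \<beta> t * \<bar>a k k k\<bar>"
proof -
  let ?u = "unit_roundoff \<beta> t"
  obtain \<theta> \<phi> \<epsilon> where bounds: "\<And>k i j. \<bar>\<theta> k i j\<bar> \<le> ?u \<and> \<bar>\<phi> k i j\<bar> \<le> ?u" "\<And>i k. \<bar>\<epsilon> i k\<bar> \<le> ?u"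
    and step: "\<forall>k\<ge>1. \<forall>i\<in>{k+1..n}. \<forall>j\<in>{k+1..n}.
         (let s = a k i k / a k k k * (1 + \<epsilon> i k) in
           a (k+1) i j = (a k i j - s * a k k j * (1 + \<theta> k i j)) * (1 + \<phi> k i j) \<and>
           \<bar>s\<bar> \<le> 1 \<and> \<bar>s * (1 + \<theta> k i j)\<bar> \<le> 1)"
    using assms(1) unfolding fp_run_def by blast
  define s where "s = a k i k / a k k k * (1 + \<epsilon> i k)"
  have "a (Suc k) i j = (a k i j - s * a k k j * (1 + \<theta> k i j)) * (1 + \<phi> k i j)"
    and "\<bar>s * (1 + \<theta> k i j)\<bar> \<le> 1"
    using step assms(3-7) unfolding s_def Let_def by auto
  with perturbed_update_error[OF _ _ _ _ _ _ assms(2) s_def] show ?thesis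
    using assms(8-10) bounds by auto
qed

locale perturbed_elimination =
  fixes u :: real and a :: "nat \<Rightarrow> nat \<Rightarrow> nat \<Rightarrow> real" and N :: nat
  assumes u_nonneg: "0 \<le> u" and N_pos: "1 \<le> N"
    and pivot_nonzero: "\<And>k. 1 \<le> k \<Longrightarrow> k \<le> N \<Longrightarrow> a k k k \<noteq> 0"
    and entry_le_pivot: "\<And>k i j. 1 \<le> k \<Longrightarrow> k \<le> i \<Longrightarrow> k \<le> j \<Longrightarrow> i \<le> N \<Longrightarrow> j \<le> N \<Longrightarrow>
        \<bar>a k i j\<bar> \<le> \<bar>a k k k\<bar>"
    and update_error: "\<And>k i j. 1 \<le> k \<Longrightarrow> k < i \<Longrightarrow> k < j \<Longrightarrow> i \<le> N \<Longrightarrow> j \<le> N \<Longrightarrow>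
        \<bar>a (Suc k) i j - (a k i j - a k i k * a k k j / a k k k)\<bar> \<le> 5 * u * \<bar>a k k k\<bar>"

lemma hatCP_perturbed_elimination:
  assumes "(A, a) \<in> hatCP \<beta> t n" and "1 \<le> N" "N \<le> n"
    and "2 \<le> n \<Longrightarrow> unit_roundoff \<beta> t \<le> 1/8"
  shows "perturbed_elimination (unit_roundoff \<beta> t) a N"
proof
  have run: "fp_run \<beta> t n A a" and pivot: "\<And>k. k \<in> {1..n} \<Longrightarrow> a k k k \<noteq> 0"
    and dom: "\<And>k i j. k \<in> {1..n} \<Longrightarrow> i \<in> {k..n} \<Longrightarrow> j \<in> {k..n} \<Longrightarrow> \<bar>a k i j\<bar> \<le> \<bar>a k k k\<bar>"
    using assms(1) unfolding hatCP_def by auto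
  show "0 \<le> unit_roundoff \<beta> t" by (simp add: unit_roundoff_def)
  show "1 \<le> N" by fact
  show "\<And>k. 1 \<le> k \<Longrightarrow> k \<le> N \<Longrightarrow> a k k k \<noteq> 0" using pivot assms(3) by auto
  show "\<And>k i j. 1 \<le> k \<Longrightarrow> k \<le> i \<Longrightarrow> k \<le> j \<Longrightarrow> i \<le> N \<Longrightarrow> j \<le> N \<Longrightarrow> \<bar>a k i j\<bar> \<le> \<bar>a k k k\<bar>"
    using dom assms(3) by auto
  show "\<bar>a (Suc k) i j - (a k i j - a k i k * a k k j / a k k k)\<bar> \<le> 5 * unit_roundoff \<beta> t * \<bar>a k k k\<bar>"
    if "1 \<le> k" "k < i" "k < j" "i \<le> N" "j \<le> N" for k i j
    using that assms(3,4) pivot[of k] dom[of k i j] dom[of k k j]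
    by (intro fp_run_update_error[OF run]) auto
qed

context perturbed_elimination
begin

definition slack :: "nat \<Rightarrow> real" where
  "slack q = 5 * u * (\<Sum>s\<in>{q..<N}. \<bar>a s s s\<bar>)"

definition row_scale :: "nat \<Rightarrow> real" where
  "row_scale q = 1 + slack q / \<bar>a q q q\<bar>"

definition shadow_lower :: "nat \<Rightarrow> nat \<Rightarrow> real" where
  "shadow_lower i q = (if q < i then a q i q / (a q q q * row_scale q) else if q = i then 1 else 0)"

definition shadow_upper :: "nat \<Rightarrow> nat \<Rightarrow> real" where
  "shadow_upper q j = (if q \<le> j then a q q j * row_scale q else 0)"

definition shadow_matrix :: "nat \<Rightarrow> nat \<Rightarrow> real" where
  "shadow_matrix i j = (\<Sum>q=1..N. shadow_lower i q * shadow_upper q j)"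

abbreviation shadow_stage :: "nat \<Rightarrow> nat \<Rightarrow> nat \<Rightarrow> real" where
  "shadow_stage k i j \<equiv> \<Sum>q=k..N. shadow_lower i q * shadow_upper q j"

lemma slack_nonneg: "0 \<le> slack q"
  unfolding slack_def using u_nonneg by (simp add: sum_nonneg)

lemma row_scale_ge_1: "1 \<le> row_scale q"
  unfolding row_scale_def using slack_nonneg[of q] by simp

lemma pivot_times_row_scale: "a q q q \<noteq> 0 \<Longrightarrow> \<bar>a q q q\<bar> * row_scale q = \<bar>a q q q\<bar> + slack q"
  unfolding row_scale_def by (simp add: field_simps)

lemma shadow_stage_split:
  assumes "1 \<le> k" "k \<le> min i j" "i \<le> N" "j \<le> N"
  shows "shadow_stage k i j = shadow_lower i (min i j) * shadow_upper (min i j) j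
           + (\<Sum>q=k..<min i j. shadow_lower i q * shadow_upper q j)"
proof -
  let ?m = "min i j"
  let ?g = "\<lambda>q. shadow_lower i q * shadow_upper q j"
  have "shadow_stage k i j = sum ?g {k..<?m} + sum ?g {?m..<Suc N}"
    using assms by (simp add: atLeastLessThanSuc_atLeastAtMost[symmetric] sum.atLeastLessThan_concat)
  also have "sum ?g {?m..<Suc N} = ?g ?m + sum ?g {Suc ?m..<Suc N}"
    using assms by (intro sum.atLeast_Suc_lessThan) auto
  also have "sum ?g {Suc ?m..<Suc N} = 0"
    by (rule sum.neutral) (auto simp: shadow_lower_def shadow_upper_def)
  finally show ?thesis by simp
qed

lemma shadow_stage_diag_error:
  assumes "1 \<le> min i j" "i \<le> N" "j \<le> N"
  shows "\<bar>shadow_stage (min i j) i j - a (min i j) i j\<bar> \<le> slack (min i j)"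
proof (cases "i \<le> j")
  case True
  have "shadow_stage i i j = a i i j * row_scale i"
    using shadow_stage_split[of i i j] assms True by (simp add: shadow_lower_def shadow_upper_def)
  moreover have "\<bar>a i i j\<bar> * (slack i / \<bar>a i i i\<bar>) \<le> \<bar>a i i i\<bar> * (slack i / \<bar>a i i i\<bar>)"
    using entry_le_pivot[of i i j] slack_nonneg[of i] assms True by (intro mult_right_mono) auto
  moreover have "\<bar>a i i i\<bar> * (slack i / \<bar>a i i i\<bar>) = slack i"
    using pivot_nonzero[of i] assms True by simp
  ultimately show ?thesis
    using True by (simp add: row_scale_def algebra_simps abs_mult slack_nonneg)
next
  case False
  have "a j j j \<noteq> 0" using pivot_nonzero[of j] assms False by auto
  then have "shadow_stage j i j = a j i j"
    using shadow_stage_split[of j i j] assms False row_scale_ge_1[of j]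
    by (simp add: shadow_lower_def shadow_upper_def)
  then show ?thesis using False slack_nonneg by simp
qed

lemma shadow_stage_error:
  assumes "1 \<le> k" "k \<le> min i j" "i \<le> N" "j \<le> N"
  shows "\<bar>shadow_stage k i j - a k i j\<bar> \<le> 5 * u * (\<Sum>s=k..<min i j. \<bar>a s s s\<bar>) + slack (min i j)"
  using assms
proof (induction "min i j - k" arbitrary: k)
  case 0
  then show ?case using shadow_stage_diag_error[of i j] by simp
next
  case (Suc d)
  let ?m = "min i j"
  have k: "k < ?m" "k \<le> N" using Suc by auto
  have IH: "\<bar>shadow_stage (Suc k) i j - a (Suc k) i j\<bar>
      \<le> 5 * u * (\<Sum>s=Suc k..<?m. \<bar>a s s s\<bar>) + slack ?m"
    using Suc k by auto
  have "a k k k \<noteq> 0" using pivot_nonzero Suc.prems k by auto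
  then have "shadow_stage k i j = a k i k * a k k j / a k k k + shadow_stage (Suc k) i j"
    using k row_scale_ge_1[of k] by (simp add: sum.atLeast_Suc_atMost shadow_lower_def shadow_upper_def)
  moreover have "\<bar>a (Suc k) i j - (a k i j - a k i k * a k k j / a k k k)\<bar> \<le> 5 * u * \<bar>a k k k\<bar>"
    using update_error[of k i j] Suc.prems k by auto
  moreover have "(\<Sum>s=k..<?m. \<bar>a s s s\<bar>) = \<bar>a k k k\<bar> + (\<Sum>s=Suc k..<?m. \<bar>a s s s\<bar>)"
    using k by (simp add: sum.atLeast_Suc_lessThan)
  ultimately show ?case
    using IH abs_triangle_ineq[of "shadow_stage (Suc k) i j - a (Suc k) i j"
        "a (Suc k) i j - (a k i j - a k i k * a k k j / a k k k)"]
    by (simp add: algebra_simps)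
qed

lemma shadow_stage_abs_le:
  assumes "1 \<le> k" "k \<le> i" "k \<le> j" "i \<le> N" "j \<le> N"
  shows "\<bar>shadow_stage k i j\<bar> \<le> \<bar>a k k k\<bar> + slack k"
proof -
  let ?m = "min i j"
  have "slack k = 5 * u * (\<Sum>s=k..<?m. \<bar>a s s s\<bar>) + slack ?m"
    unfolding slack_def using assms
    by (simp add: sum.atLeastLessThan_concat[symmetric, of k ?m N] algebra_simps)
  then show ?thesis
    using entry_le_pivot[of k i j] shadow_stage_error[of k i j] assms
      abs_triangle_ineq[of "shadow_stage k i j - a k i j" "a k i j"] by auto
qed

lemma shadow_stage_pivot:
  assumes "1 \<le> k" "k \<le> N"
  shows "\<bar>shadow_stage k k k\<bar> = \<bar>a k k k\<bar> + slack k"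
proof -
  have "shadow_stage k k k = a k k k * row_scale k"
    using shadow_stage_split[of k k k] assms by (simp add: shadow_lower_def shadow_upper_def)
  then show ?thesis
    using pivot_times_row_scale pivot_nonzero assms row_scale_ge_1[of k] by (simp add: abs_mult)
qed

lemma shadow_upper_diag_nonzero: "1 \<le> k \<Longrightarrow> k \<le> N \<Longrightarrow> shadow_upper k k \<noteq> 0"
  using pivot_nonzero[of k] row_scale_ge_1[of k] by (simp add: shadow_upper_def)

lemma ge_shadow_matrix:
  "1 \<le> k \<Longrightarrow> k \<le> N \<Longrightarrow> k \<le> i \<Longrightarrow> k \<le> j \<Longrightarrow> ge shadow_matrix k i j = shadow_stage k i j"
  unfolding shadow_matrix_def[abs_def]
proof (rule ge_LU_product)
  show "\<And>k. k \<in> {1..N} \<Longrightarrow> shadow_upper k k \<noteq> 0"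
    using shadow_upper_diag_nonzero by auto
qed (auto simp: shadow_lower_def shadow_upper_def)

lemma shadow_matrix_in_CP: "shadow_matrix \<in> CP N"
  unfolding CP_def
proof (intro CollectI conjI ballI)
  show "mat_invertible N shadow_matrix"
    unfolding shadow_matrix_def[abs_def]
  proof (rule mat_invertible_LU_product)
    show "\<And>k. k \<in> {1..N} \<Longrightarrow> shadow_upper k k \<noteq> 0"
      using shadow_upper_diag_nonzero by auto
  qed (auto simp: shadow_lower_def shadow_upper_def)
next
  fix k assume "k \<in> {1..<N}"
  then show "ge shadow_matrix k k k \<noteq> 0"
    using ge_shadow_matrix[of k k k] shadow_stage_pivot[of k] pivot_nonzero[of k] slack_nonneg[of k]
    by auto
next
  fix k i j assume "k \<in> {1..N}" "i \<in> {k..N}" "j \<in> {k..N}"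
  then show "\<bar>ge shadow_matrix k i j\<bar> \<le> \<bar>ge shadow_matrix k k k\<bar>"
    using ge_shadow_matrix[of k i j] ge_shadow_matrix[of k k k] shadow_stage_abs_le[of k i j]
      shadow_stage_pivot[of k] by auto
qed

lemma max_entry_shadow_matrix: "max_entry N shadow_matrix = \<bar>a 1 1 1\<bar> + slack 1"
  unfolding max_entry_def
proof (rule Max_eqI[OF finite_entries])
  fix y assume "y \<in> {\<bar>shadow_matrix i j\<bar> |i j. i \<in> {1..N} \<and> j \<in> {1..N}}"
  then show "y \<le> \<bar>a 1 1 1\<bar> + slack 1"
    using shadow_stage_abs_le[of 1] by (auto simp: shadow_matrix_def)
next
  show "\<bar>a 1 1 1\<bar> + slack 1 \<in> {\<bar>shadow_matrix i j\<bar> |i j. i \<in> {1..N} \<and> j \<in> {1..N}}"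
    using shadow_stage_pivot[of 1] N_pos by (force simp: shadow_matrix_def)
qed

lemma pivot_le_growth_shadow_matrix:
  assumes "1 \<le> k" "k \<le> N"
  shows "\<bar>a k k k\<bar> \<le> growth N shadow_matrix * (\<bar>a 1 1 1\<bar> + slack 1)"
proof -
  have "\<bar>a k k k\<bar> \<le> \<bar>ge shadow_matrix k k k\<bar>"
    using ge_shadow_matrix[of k k k] shadow_stage_pivot[of k] slack_nonneg assms by simp
  also have "\<dots> \<le> max_stage_entry N (ge shadow_matrix)"
    unfolding max_stage_entry_def using assms by (intro Max_ge[OF finite_stage_entries]) blast
  also have "\<dots> = growth N shadow_matrix * (\<bar>a 1 1 1\<bar> + slack 1)"
    using pivot_nonzero[of 1] N_pos slack_nonneg[of 1]
    unfolding growth_def max_entry_shadow_matrix by simp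
  finally show ?thesis .
qed

lemma fp_growth_le_growth_shadow_matrix:
  assumes "slack 1 \<le> C * \<bar>a 1 1 1\<bar>"
  shows "fp_growth N a \<le> (1 + C) * growth N shadow_matrix"
proof -
  let ?bound = "growth N shadow_matrix * ((1 + C) * \<bar>a 1 1 1\<bar>)"
  have p1: "0 < \<bar>a 1 1 1\<bar>" using pivot_nonzero[of 1] N_pos by simp
  have "0 < growth N shadow_matrix * (\<bar>a 1 1 1\<bar> + slack 1)"
    using pivot_le_growth_shadow_matrix[of 1] N_pos p1 by linarith
  then have "0 \<le> growth N shadow_matrix"
    using p1 slack_nonneg[of 1] by (auto simp: zero_less_mult_iff)
  then have "growth N shadow_matrix * (\<bar>a 1 1 1\<bar> + slack 1) \<le> ?bound"
    using assms by (intro mult_left_mono) (auto simp: algebra_simps)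
  then have pivots: "\<bar>a k k k\<bar> \<le> ?bound" if "1 \<le> k" "k \<le> N" for k
    using pivot_le_growth_shadow_matrix[OF that] by linarith
  have "max_stage_entry N a \<le> ?bound"
    unfolding max_stage_entry_def
  proof (rule Max.boundedI[OF finite_stage_entries])
    show "{\<bar>a k i j\<bar> |k i j. 1 \<le> k \<and> k \<le> i \<and> k \<le> j \<and> i \<le> N \<and> j \<le> N} \<noteq> {}"
      using N_pos by blast
  qed (use entry_le_pivot pivots in fastforce)
  moreover have "max_entry N (a 1) = \<bar>a 1 1 1\<bar>"
    unfolding max_entry_def
  proof (rule Max_eqI[OF finite_entries])
    show "\<bar>a 1 1 1\<bar> \<in> {\<bar>a 1 i j\<bar> |i j. i \<in> {1..N} \<and> j \<in> {1..N}}" using N_pos by force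
  qed (use entry_le_pivot[of 1] in auto)
  ultimately show ?thesis
    unfolding fp_growth_def using p1 by (simp add: pos_divide_le_eq mult_ac)
qed

end

lemma gCP_ge_1:
  assumes "1 \<le> n"
  shows "1 \<le> gCP n"
proof -
  define identity_run :: "nat \<Rightarrow> nat \<Rightarrow> nat \<Rightarrow> real" where
    "identity_run k i j = (if i = j then 1 else 0)" for k i j
  interpret perturbed_elimination 0 identity_run n
    using assms by unfold_locales (auto simp: identity_run_def)
  have "1 \<le> growth n shadow_matrix"
    using pivot_le_growth_shadow_matrix[of 1] assms by (simp add: identity_run_def slack_def)
  also have "ereal (growth n shadow_matrix) \<le> gCP n"
    unfolding gCP_def using shadow_matrix_in_CP by (rule SUP_upper)
  finally show ?thesis by (simp add: one_ereal_def)
qed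

lemma pivot_sum_le_of_recursion:
  fixes p G :: "nat \<Rightarrow> real" and e C :: real
  assumes recursion: "\<And>r. 1 \<le> r \<Longrightarrow> r < n \<Longrightarrow> p r \<le> G r * (p 1 + e * (\<Sum>s\<in>{1..<r}. p s))"
    and budget: "e * (1 + C) * (\<Sum>s\<in>{1..<n}. G s) \<le> C"
    and "0 \<le> e" "0 \<le> C" "0 \<le> p 1" and G_nonneg: "\<And>s. s \<in> {1..<n} \<Longrightarrow> 0 \<le> G s"
  shows "e * (\<Sum>s\<in>{1..<n}. p s) \<le> C * p 1"
proof -
  have partial: "e * (\<Sum>s\<in>{1..<r}. p s) \<le> C * p 1"
    if "r \<le> n" and bound: "\<And>s. s \<in> {1..<r} \<Longrightarrow> p s \<le> (1 + C) * G s * p 1" for r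
  proof -
    have "e * (\<Sum>s\<in>{1..<r}. p s) \<le> e * (\<Sum>s\<in>{1..<r}. (1 + C) * G s * p 1)"
      using bound assms(3) by (intro mult_left_mono sum_mono) auto
    also have "\<dots> = e * (1 + C) * (\<Sum>s\<in>{1..<r}. G s) * p 1"
      by (simp add: sum_distrib_left sum_distrib_right mult_ac)
    also have "\<dots> \<le> e * (1 + C) * (\<Sum>s\<in>{1..<n}. G s) * p 1"
      using that assms(3-5) G_nonneg
      by (intro mult_right_mono mult_left_mono sum_mono2) auto
    also have "\<dots> \<le> C * p 1" using budget assms(5) by (rule mult_right_mono)
    finally show ?thesis .
  qed
  have "p r \<le> (1 + C) * G r * p 1" if "r \<in> {1..<n}" for r
    using that
  proof (induction r rule: less_induct)
    case (less r)
    then have "e * (\<Sum>s\<in>{1..<r}. p s) \<le> C * p 1" by (intro partial) auto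
    then have "G r * (p 1 + e * (\<Sum>s\<in>{1..<r}. p s)) \<le> G r * ((1 + C) * p 1)"
      using G_nonneg less.prems by (intro mult_left_mono) (auto simp: algebra_simps)
    then show ?case using recursion[of r] less.prems by (simp add: mult_ac)
  qed
  then show ?thesis by (intro partial) auto
qed

lemma fp_growth_le_gCP:
  assumes run: "(A, a) \<in> hatCP \<beta> t n" and "1 \<le> n" "0 \<le> C"
    and roundoff_small: "2 \<le> n \<Longrightarrow> unit_roundoff \<beta> t \<le> 1/8"
    and G: "\<And>s. s \<in> {1..<n} \<Longrightarrow> gCP s = ereal (G s)"
    and budget: "5 * unit_roundoff \<beta> t * (1 + C) * (\<Sum>s\<in>{1..<n}. G s) \<le> C"
  shows "ereal (fp_growth n a) \<le> ereal (1 + C) * gCP n"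
proof -
  let ?u = "unit_roundoff \<beta> t"
  have leading_part: "perturbed_elimination ?u a N" if "1 \<le> N" "N \<le> n" for N
    using hatCP_perturbed_elimination[OF run that roundoff_small] .
  have growth_le_gCP: "ereal (growth N X) \<le> gCP N" if "X \<in> CP N" for N X
    unfolding gCP_def using that by (rule SUP_upper)
  have slack_le: "5 * ?u * (\<Sum>s\<in>{1..<n}. \<bar>a s s s\<bar>) \<le> C * \<bar>a 1 1 1\<bar>"
  proof (rule pivot_sum_le_of_recursion[where G = G])
    fix r assume r: "1 \<le> r" "r < n"
    interpret perturbed_elimination ?u a r using leading_part r by simp
    have "growth r shadow_matrix \<le> G r"
      using growth_le_gCP[OF shadow_matrix_in_CP] G r by simp
    moreover have "0 \<le> \<bar>a 1 1 1\<bar> + slack 1" using slack_nonneg[of 1] by simp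
    ultimately show "\<bar>a r r r\<bar> \<le> G r * (\<bar>a 1 1 1\<bar> + 5 * ?u * (\<Sum>s\<in>{1..<r}. \<bar>a s s s\<bar>))"
      using pivot_le_growth_shadow_matrix[of r] r unfolding slack_def
      by (meson mult_right_mono order_trans order_refl)
  next
    show "0 \<le> G s" if "s \<in> {1..<n}" for s
      using gCP_ge_1[of s] G[OF that] that by simp
  qed (use budget assms(3) in \<open>auto simp: unit_roundoff_def\<close>)
  interpret perturbed_elimination ?u a n using leading_part assms(2) by simp
  have "fp_growth n a \<le> (1 + C) * growth n shadow_matrix"
    using slack_le by (intro fp_growth_le_growth_shadow_matrix) (simp add: slack_def)
  then have "ereal (fp_growth n a) \<le> ereal (1 + C) * ereal (growth n shadow_matrix)" by simp
  also have "\<dots> \<le> ereal (1 + C) * gCP n"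
    using growth_le_gCP[OF shadow_matrix_in_CP] assms(3) by (intro ereal_mult_left_mono) auto
  finally show ?thesis .
qed

lemma unit_roundoff_budget:
  fixes C S :: real
  assumes "2 \<le> \<beta>" "0 < C" "1 \<le> S"
    and t: "real t \<ge> 1 + log (real \<beta>) ((1 + C) * (4 + 5 * C) / C * S)"
  shows "5 * unit_roundoff \<beta> t * (1 + C) * S \<le> C" and "unit_roundoff \<beta> t \<le> 1/8"
proof -
  let ?u = "unit_roundoff \<beta> t"
  have u: "0 \<le> ?u" by (simp add: unit_roundoff_def)
  have "(1 + C) * (4 + 5 * C) / C * S \<le> real \<beta> powr (real t - 1)"
    using t assms(1-3) by (subst log_le_iff[symmetric]) auto
  then have "(1 + C) * (4 + 5 * C) / C * S * (2 * ?u) \<le> real \<beta> powr (real t - 1) * (2 * ?u)"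
    using u by (intro mult_right_mono) auto
  also have "\<dots> = 1"
    using assms(1) by (simp add: unit_roundoff_def powr_add[symmetric])
  finally have "(1 + C) * (4 + 5 * C) / C * S * (2 * ?u) \<le> 1" .
  then have key: "(2 * (4 + 5 * C)) * (?u * (1 + C) * S) \<le> C"
    using assms(2) by (simp add: field_simps)
  have "5 * (?u * (1 + C) * S) \<le> (2 * (4 + 5 * C)) * (?u * (1 + C) * S)"
    using u assms(2,3) by (intro mult_right_mono) auto
  with key show "5 * ?u * (1 + C) * S \<le> C" by (simp add: mult.assoc)
  have "1 * 1 \<le> (1 + C) * S" using assms(2,3) by (intro mult_mono) auto
  then have "?u * 1 \<le> ?u * ((1 + C) * S)" using u by (intro mult_left_mono) auto
  then have "?u \<le> ?u * (1 + C) * S" by (simp add: mult.assoc)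
  then have "(2 * (4 + 5 * C)) * ?u \<le> (2 * (4 + 5 * C)) * (?u * (1 + C) * S)"
    using assms(2) by (intro mult_left_mono) auto
  with key have "?u * (8 + 10 * C) \<le> C" by (simp add: algebra_simps)
  then have "?u * (8 + 10 * C) \<le> 1/8 * (8 + 10 * C)" using assms(2) by (simp add: algebra_simps)
  then show "?u \<le> 1/8" using assms(2) by (simp add: mult_le_cancel_right)
qed

lemma sum_le_double_product_sum:
  fixes f :: "nat \<Rightarrow> ereal"
  assumes f_ge_1: "\<And>l. 1 \<le> l \<Longrightarrow> 1 \<le> f l"
  shows "(\<Sum>m\<in>{1..<n}. f m) \<le> (\<Sum>m=1..n-1. \<Sum>l=1..n-m. f l * f m)"
proof -
  have f_nonneg: "0 \<le> f l" if "1 \<le> l" for l using f_ge_1[OF that] by (rule order_trans[rotated]) simp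
  have "(\<Sum>m\<in>{1..<n}. f m) = (\<Sum>m=1..n-1. f m)" by (rule sum.cong) auto
  also have "\<dots> \<le> (\<Sum>m=1..n-1. \<Sum>l=1..n-m. f l * f m)"
  proof (rule sum_mono)
    fix m assume m: "m \<in> {1..n-1}"
    have "f m = 1 * f m" by simp
    also have "\<dots> \<le> f 1 * f m" using f_ge_1[of 1] f_nonneg m by (intro ereal_mult_right_mono) auto
    also have "\<dots> = (\<Sum>l\<in>{1}. f l * f m)" by simp
    also have "\<dots> \<le> (\<Sum>l=1..n-m. f l * f m)"
      using m f_nonneg by (intro sum_mono2) auto
    finally show "f m \<le> (\<Sum>l=1..n-m. f l * f m)" .
  qed
  finally show ?thesis .
qed

lemma real_sum_le_double_product_sum:
  fixes f :: "nat \<Rightarrow> ereal"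
  assumes f_ge_1: "\<And>l. 1 \<le> l \<Longrightarrow> 1 \<le> f l"
    and finite: "(\<Sum>m=1..n-1. \<Sum>l=1..n-m. f l * f m) < \<infinity>"
  shows "\<And>m. m \<in> {1..<n} \<Longrightarrow> f m = ereal (real_of_ereal (f m))"
    and "(\<Sum>m\<in>{1..<n}. real_of_ereal (f m)) \<le> real_of_ereal (\<Sum>m=1..n-1. \<Sum>l=1..n-m. f l * f m)"
proof -
  have f_nonneg: "0 \<le> f l" if "1 \<le> l" for l using f_ge_1[OF that] by (rule order_trans[rotated]) simp
  have sum_le: "(\<Sum>m\<in>{1..<n}. f m) \<le> (\<Sum>m=1..n-1. \<Sum>l=1..n-m. f l * f m)"
    using f_ge_1 by (rule sum_le_double_product_sum)
  have "f m < \<infinity>" if "m \<in> {1..<n}" for m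
  proof -
    have "f m \<le> (\<Sum>m\<in>{1..<n}. f m)"
      using sum_mono2[of "{1..<n}" "{m}" f] that f_nonneg by simp
    then show ?thesis using sum_le finite by (meson order.trans le_less_trans)
  qed
  then have real: "\<bar>f m\<bar> \<noteq> \<infinity>" if "m \<in> {1..<n}" for m
    using that f_nonneg[of m] by auto
  then show "\<And>m. m \<in> {1..<n} \<Longrightarrow> f m = ereal (real_of_ereal (f m))"
    by (simp add: ereal_real')
  have "(\<Sum>m\<in>{1..<n}. real_of_ereal (f m)) = real_of_ereal (\<Sum>m\<in>{1..<n}. f m)"
    using real by (rule sum_real_of_ereal)
  also have "\<dots> \<le> real_of_ereal (\<Sum>m=1..n-1. \<Sum>l=1..n-m. f l * f m)"
    using sum_le finite f_nonneg by (intro real_of_ereal_positive_mono sum_nonneg) auto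
  finally show "(\<Sum>m\<in>{1..<n}. real_of_ereal (f m)) \<le> real_of_ereal (\<Sum>m=1..n-1. \<Sum>l=1..n-m. f l * f m)" .
qed

theorem mainTheorem9:
  fixes \<beta> t n :: nat and C :: real
  assumes "\<beta> \<ge> 2" and "n \<ge> 1" and "0 < C" and "C < 1"
    and "(\<Sum>m=1..n-1. \<Sum>l=1..n-m. gCP l * gCP m) < \<infinity>"
    and "real t \<ge> 1 + log (real \<beta>)
           ((1 + C) * (4 + 5 * C) / C *
             real_of_ereal (\<Sum>m=1..n-1. \<Sum>l=1..n-m. gCP l * gCP m))"
  shows "GhatCP \<beta> t n \<le> ereal (1 + C) * gCP n"
proof -
  let ?u = "unit_roundoff \<beta> t"
  define S where "S = real_of_ereal (\<Sum>m=1..n-1. \<Sum>l=1..n-m. gCP l * gCP m)"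
  define G where "G s = real_of_ereal (gCP s)" for s
  have G: "\<And>s. s \<in> {1..<n} \<Longrightarrow> gCP s = ereal (G s)" and sum_G: "(\<Sum>s\<in>{1..<n}. G s) \<le> S"
    using real_sum_le_double_product_sum[OF gCP_ge_1 assms(5)] unfolding G_def S_def by auto
  have budget: "5 * ?u * (1 + C) * (\<Sum>s\<in>{1..<n}. G s) \<le> C \<and> (2 \<le> n \<longrightarrow> ?u \<le> 1/8)"
  proof (cases "n = 1")
    case False
    have G_ge_1: "s \<in> {1..<n} \<Longrightarrow> 1 \<le> G s" for s using G gCP_ge_1[of s] by fastforce
    then have "1 \<le> S"
      using False assms(2) member_le_sum[of 1 "{1..<n}" G] sum_G by fastforce
    from unit_roundoff_budget[OF assms(1,3) this assms(6)[folded S_def]]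
    have "5 * ?u * (1 + C) * S \<le> C" and "?u \<le> 1/8" .
    moreover have "0 \<le> 5 * ?u * (1 + C)" using assms(3) by (simp add: unit_roundoff_def)
    ultimately show ?thesis using mult_left_mono[OF sum_G] by fastforce
  qed (use assms(3) in simp)
  show ?thesis
    unfolding GhatCP_def
  proof (rule SUP_least, safe)
    fix A a assume "(A, a) \<in> hatCP \<beta> t n"
    then show "ereal (fp_growth n (snd (A, a))) \<le> ereal (1 + C) * gCP n"
      using fp_growth_le_gCP[of A a \<beta> t n C G] assms(2,3) G budget by simp
  qed
qed

end
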